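(* Let $K\subseteq\mathbb{R}^n$ be a proper cone and let $A\in\mathbb{R}^{n\times n}$ be $K$-monotone. Let $A=U-V$ be a $K$-regular splitting. Let $U=F-G$ be a $K$-weak regular splitting of type I and $U=\overline{F}-\overline{G}$ a $K$-weak regular splitting of type II of $U$ such that $V\overline{F}^{-1}\overline{G}=\overline{G}\,\overline{F}^{-1}V$. For a positive integer $s$ let $$T_{s}=(F^{-1}G)^{s}+\sum_{j=0}^{s-1}(F^{-1}G)^{j}F^{-1}V,\qquad \overline{T}_{s}=(\overline{F}^{-1}\overline{G})^{s}+\sum_{j=0}^{s-1}(\overline{F}^{-1}\overline{G})^{j}\overline{F}^{-1}V.$$ If $F^{-1}\geq_K\overline{F}^{-1}$ and $F^{-1}G\geq_K\overline{F}^{-1}\overline{G}$, then $\rho(T_s)\leq\rho(\overline{T}_s)<1$.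
   Context: A proper cone $K\subseteq\mathbb{R}^n$ is a closed, convex, pointed, solid cone. For $M\in\mathbb{R}^{n\times n}$, $M\geq_K 0$ means $MK\subseteq K$, and $M\geq_K N$ means $M-N\geq_K0$. A matrix $A$ is $K$-monotone if $A$ is nonsingular and $A^{-1}\geq_K 0$. A splitting $A=U-V$ (with $U$ nonsingular) is $K$-regular if $U^{-1}\geq_K 0$ and $V\geq_K 0$; it is a $K$-weak regular splitting of type I if $U^{-1}\geq_K 0$ and $U^{-1}V\geq_K 0$, and of type II if $U^{-1}\geq_K 0$ and $VU^{-1}\geq_K 0$. $\rho$ denotes spectral radius. *)

theory Defs
  imports "HOL-Analysis.Analysis"
begin

definition proper_cone :: "(real ^ 'n) set \<Rightarrow> bool" where
  "proper_cone K \<longleftrightarrow> cone K \<and> convex K \<and> closed K \<and>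
     K \<inter> uminus ` K = {0} \<and> interior K \<noteq> {}"

definition K_nonneg :: "(real ^ 'n) set \<Rightarrow> real ^ 'n ^ 'n \<Rightarrow> bool" where
  "K_nonneg K M \<longleftrightarrow> (\<forall>x\<in>K. M *v x \<in> K)"

definition K_ge :: "(real ^ 'n) set \<Rightarrow> real ^ 'n ^ 'n \<Rightarrow> real ^ 'n ^ 'n \<Rightarrow> bool" where
  "K_ge K M N \<longleftrightarrow> K_nonneg K (M - N)"

definition K_monotone :: "(real ^ 'n) set \<Rightarrow> real ^ 'n ^ 'n \<Rightarrow> bool" where
  "K_monotone K A \<longleftrightarrow> invertible A \<and> K_nonneg K (matrix_inv A)"

definition K_regular_splitting ::
  "(real ^ 'n) set \<Rightarrow> real ^ 'n ^ 'n \<Rightarrow> real ^ 'n ^ 'n \<Rightarrow> real ^ 'n ^ 'n \<Rightarrow> bool" where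
  "K_regular_splitting K A U V \<longleftrightarrow> A = U - V \<and> invertible U \<and>
     K_nonneg K (matrix_inv U) \<and> K_nonneg K V"

definition K_weak_regular_I ::
  "(real ^ 'n) set \<Rightarrow> real ^ 'n ^ 'n \<Rightarrow> real ^ 'n ^ 'n \<Rightarrow> real ^ 'n ^ 'n \<Rightarrow> bool" where
  "K_weak_regular_I K A U V \<longleftrightarrow> A = U - V \<and> invertible U \<and>
     K_nonneg K (matrix_inv U) \<and> K_nonneg K (matrix_inv U ** V)"

definition K_weak_regular_II ::
  "(real ^ 'n) set \<Rightarrow> real ^ 'n ^ 'n \<Rightarrow> real ^ 'n ^ 'n \<Rightarrow> real ^ 'n ^ 'n \<Rightarrow> bool" where
  "K_weak_regular_II K A U V \<longleftrightarrow> A = U - V \<and> invertible U \<and>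
     K_nonneg K (matrix_inv U) \<and> K_nonneg K (V ** matrix_inv U)"

primrec mat_pow :: "real ^ 'n ^ 'n \<Rightarrow> nat \<Rightarrow> real ^ 'n ^ 'n" where
  "mat_pow M 0 = mat 1"
| "mat_pow M (Suc k) = M ** mat_pow M k"

definition spectral_radius :: "real ^ 'n ^ 'n \<Rightarrow> real" where
  "spectral_radius A = Max {norm z | z :: complex.
      det (mat z - (\<chi> i j. complex_of_real (A $ i $ j))) = 0}"

end

theory Submission
  imports Defs "HOL-Computational_Algebra.Fundamental_Theorem_Algebra"
begin

text \<open>
  The two comparison hypotheses force \<open>F\<^sup>-\<^sup>1 = Fb\<^sup>-\<^sup>1\<close>: since \<open>F\<^sup>-\<^sup>1 G = I - F\<^sup>-\<^sup>1 U\<close>, the second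
  one says \<open>(Fb\<^sup>-\<^sup>1 - F\<^sup>-\<^sup>1) U \<ge>\<^sub>K 0\<close>, and multiplying by \<open>U\<^sup>-\<^sup>1 \<ge>\<^sub>K 0\<close> gives \<open>Fb\<^sup>-\<^sup>1 \<ge>\<^sub>K F\<^sup>-\<^sup>1\<close>;
  as a proper cone is pointed and spans the space, \<open>\<ge>\<^sub>K\<close> is antisymmetric.

  It remains to show \<open>\<rho>(T\<^sub>s) < 1\<close>. Telescoping gives \<open>T\<^sub>s = I - B\<^sub>s A\<close> with
  \<open>B\<^sub>s = \<Sum>j<s. (F\<^sup>-\<^sup>1 G)\<^sup>j F\<^sup>-\<^sup>1 \<ge>\<^sub>K F\<^sup>-\<^sup>1\<close>. For an interior point \<open>c\<close> of \<open>K\<close> let \<open>w = A\<^sup>-\<^sup>1 c\<close> and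
  \<open>z = F\<^sup>-\<^sup>1 c\<close>; then \<open>B\<^sub>s c = (I - T\<^sub>s) w\<close>, so \<open>\<Sum>k<m. T\<^sub>s\<^sup>k z \<le>\<^sub>K w - T\<^sub>s\<^sup>m w \<le>\<^sub>K w\<close>. A linear
  functional that is bounded below by a multiple of the norm on \<open>K\<close> turns this into summability,
  so \<open>T\<^sub>s\<^sup>k z \<longrightarrow> 0\<close>. Every vector lies between \<open>-r z\<close> and \<open>r z\<close> for some \<open>r\<close>, hence
  \<open>T\<^sub>s\<^sup>k x \<longrightarrow> 0\<close> for all \<open>x\<close>, and every eigenvalue of \<open>T\<^sub>s\<close> has modulus less than 1.
\<close>

lemma matrix_inv_right: "invertible M \<Longrightarrow> M ** matrix_inv M = mat 1"
  and matrix_inv_left: "invertible M \<Longrightarrow> matrix_inv M ** M = mat 1"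
  unfolding invertible_def matrix_inv_def by (metis (mono_tags, lifting) someI_ex)+

lemma matrix_add_rdistrib: "(A + B) ** C = A ** C + B ** C"
  by (vector matrix_matrix_mult_def sum.distrib distrib_right)

lemma matrix_diff_ldistrib: "(A :: 'a::ring_1^'n^'m) ** (B - C) = A ** B - A ** C"
  by (vector matrix_matrix_mult_def sum_subtractf right_diff_distrib)

lemma matrix_diff_rdistrib: "((A :: 'a::ring_1^'n^'m) - B) ** C = A ** C - B ** C"
  by (vector matrix_matrix_mult_def sum_subtractf left_diff_distrib)

lemma mat_pow_Suc_right: "mat_pow M (Suc k) = mat_pow M k ** M"
  by (induction k) (simp_all add: matrix_mul_assoc)

lemma sum_matrix_mult: "sum f S ** (B :: 'a::semiring_1^'p^'n) = (\<Sum>i\<in>S. f i ** B)"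
  by (induction S rule: infinite_finite_induct) (simp_all add: matrix_add_rdistrib)

lemma sum_matrix_vector_mult: "sum f S *v (x :: 'a::semiring_1^'n) = (\<Sum>i\<in>S. f i *v x)"
  by (induction S rule: infinite_finite_induct) (simp_all add: matrix_vector_mult_add_rdistrib)

lemma mat_pow_telescope:
  "(\<Sum>j<s. mat_pow H j ** (mat 1 - H)) = mat 1 - mat_pow H s"
proof -
  have "(\<Sum>j<s. mat_pow H j ** (mat 1 - H)) = (\<Sum>j<s. mat_pow H j - mat_pow H (Suc j))"
    by (simp only: matrix_diff_ldistrib matrix_mul_rid mat_pow_Suc_right)
  also have "\<dots> = mat 1 - mat_pow H s"
    by (simp only: sum_lessThan_telescope' mat_pow.simps(1))
  finally show ?thesis .
qed

lemma matrix_inv_mult_splitting: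
  fixes U F G :: "'a::ring_1^'n^'n"
  assumes "U = F - G" "invertible F"
  shows "matrix_inv F ** G = mat 1 - matrix_inv F ** U"
proof -
  have "G = F - U"
    using assms(1) by simp
  then show ?thesis
    by (simp add: matrix_diff_ldistrib matrix_inv_left[OF assms(2)])
qed

lemma splitting_iteration_matrix_eq:
  fixes A U V F G :: "real^'n^'n"
  assumes "A = U - V" "U = F - G" "invertible F"
  defines "H \<equiv> matrix_inv F ** G"
  shows "mat_pow H s + (\<Sum>j<s. mat_pow H j ** matrix_inv F ** V)
           = mat 1 - (\<Sum>j<s. mat_pow H j ** matrix_inv F) ** A"
proof -
  have "matrix_inv F ** U = mat 1 - H"
    using matrix_inv_mult_splitting[OF assms(2,3)] by (simp add: H_def)
  then have "(\<Sum>j<s. mat_pow H j ** matrix_inv F) ** U = (\<Sum>j<s. mat_pow H j ** (mat 1 - H))"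
    by (simp add: sum_matrix_mult matrix_mul_assoc[symmetric])
  also have "\<dots> = mat 1 - mat_pow H s"
    by (rule mat_pow_telescope)
  finally show ?thesis
    using assms(1) by (simp add: matrix_diff_ldistrib sum_matrix_mult matrix_mul_assoc)
qed

section \<open>Proper cones and order units\<close>

lemma proper_cone_convex_cone: "proper_cone K \<Longrightarrow> convex_cone K"
  unfolding proper_cone_def convex_cone_def conic_def cone_def by auto

lemma proper_cone_pointed: "proper_cone K \<Longrightarrow> x \<in> K \<Longrightarrow> - x \<in> K \<Longrightarrow> x = 0"
  unfolding proper_cone_def by (metis IntI image_eqI minus_minus singletonD)

lemma convex_cone_sum: "convex_cone K \<Longrightarrow> (\<And>i. i \<in> S \<Longrightarrow> g i \<in> K) \<Longrightarrow> sum g S \<in> K"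
  by (induction S rule: infinite_finite_induct) (auto simp: convex_cone_contains_0 convex_cone_add)

definition order_unit :: "'a::real_vector set \<Rightarrow> 'a \<Rightarrow> bool" where
  "order_unit K z \<longleftrightarrow> (\<forall>y. \<exists>r. r *\<^sub>R z + y \<in> K \<and> r *\<^sub>R z - y \<in> K)"

lemma interior_cone_imp_order_unit:
  fixes K :: "'a::real_normed_vector set"
  assumes "cone K" and "c \<in> interior K"
  shows "order_unit K c"
  unfolding order_unit_def
proof
  fix y :: 'a
  obtain e where e: "e > 0" "ball c e \<subseteq> K"
    using assms(2) by (auto simp: mem_interior)
  define t where "t = e / (norm y + 1)"
  have t: "t > 0" using e(1) by (simp add: t_def add_nonneg_pos)
  have "norm (t *\<^sub>R y) = e * (norm y / (norm y + 1))"
    using e(1) by (simp add: t_def)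
  also have "\<dots> < e * 1"
    using e(1) by (intro mult_strict_left_mono) (simp_all add: divide_less_eq add_nonneg_pos)
  finally have "norm (t *\<^sub>R y) < e"
    by simp
  then have "c + t *\<^sub>R y \<in> K" "c - t *\<^sub>R y \<in> K"
    using e(2) by (auto simp: dist_norm subset_iff)
  then have "(1 / t) *\<^sub>R (c + t *\<^sub>R y) \<in> K" "(1 / t) *\<^sub>R (c - t *\<^sub>R y) \<in> K"
    using assms(1) t by (auto simp: cone_def)
  then show "\<exists>r. r *\<^sub>R c + y \<in> K \<and> r *\<^sub>R c - y \<in> K"
    using t by (intro exI[of _ "1 / t"]) (simp add: algebra_simps)
qed

lemma proper_cone_has_order_unit:
  assumes "proper_cone K"
  obtains c where "c \<in> K" "order_unit K c"
proof -
  obtain c where "c \<in> interior K"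
    using assms unfolding proper_cone_def by auto
  then show thesis
    using assms interior_subset interior_cone_imp_order_unit that
    unfolding proper_cone_def by blast
qed

lemma order_unit_matrix_image:
  assumes "invertible M" "K_nonneg K M" "order_unit K z"
  shows "order_unit K (M *v z)"
  unfolding order_unit_def
proof
  fix y
  obtain r where "r *\<^sub>R z + matrix_inv M *v y \<in> K" "r *\<^sub>R z - matrix_inv M *v y \<in> K"
    using assms(3) unfolding order_unit_def by blast
  then have "M *v (r *\<^sub>R z + matrix_inv M *v y) \<in> K" "M *v (r *\<^sub>R z - matrix_inv M *v y) \<in> K"
    using assms(2) unfolding K_nonneg_def by blast+
  then show "\<exists>r. r *\<^sub>R (M *v z) + y \<in> K \<and> r *\<^sub>R (M *v z) - y \<in> K"
    using matrix_inv_right[OF assms(1)]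
    by (auto simp: matrix_vector_right_distrib matrix_vector_mult_diff_distrib
        matrix_vector_mult_scaleR matrix_vector_mul_assoc)
qed

lemma K_nonneg_mult: "K_nonneg K A \<Longrightarrow> K_nonneg K B \<Longrightarrow> K_nonneg K (A ** B)"
  unfolding K_nonneg_def by (simp add: matrix_vector_mul_assoc[symmetric])

lemma K_nonneg_mat_pow: "K_nonneg K A \<Longrightarrow> K_nonneg K (mat_pow A k)"
  by (induction k) (simp_all add: K_nonneg_mult, simp add: K_nonneg_def)

lemma K_nonneg_add: "convex_cone K \<Longrightarrow> K_nonneg K A \<Longrightarrow> K_nonneg K B \<Longrightarrow> K_nonneg K (A + B)"
  unfolding K_nonneg_def by (simp add: matrix_vector_mult_add_rdistrib convex_cone_add)

lemma K_nonneg_sum: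
  "convex_cone K \<Longrightarrow> (\<And>i. i \<in> S \<Longrightarrow> K_nonneg K (f i)) \<Longrightarrow> K_nonneg K (sum f S)"
  unfolding K_nonneg_def by (auto simp: sum_matrix_vector_mult intro: convex_cone_sum)

lemma K_ge_antisym:
  assumes "proper_cone K" "K_ge K M N" "K_ge K N M"
  shows "M = N"
proof -
  have on_K: "M *v x = N *v x" if "x \<in> K" for x
  proof -
    have "M *v x - N *v x \<in> K" "- (M *v x - N *v x) \<in> K"
      using assms(2,3) that unfolding K_ge_def K_nonneg_def
      by (simp_all add: matrix_vector_mult_diff_rdistrib)
    then show ?thesis
      using proper_cone_pointed[OF assms(1)] by fastforce
  qed
  obtain c where c: "c \<in> K" "order_unit K c"
    using proper_cone_has_order_unit[OF assms(1)] .
  have "M *v y = N *v y" for y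
  proof -
    obtain r where "r *\<^sub>R c + y \<in> K"
      using c(2) unfolding order_unit_def by blast
    then have "M *v (r *\<^sub>R c + y) = N *v (r *\<^sub>R c + y)"
      by (rule on_K)
    then show ?thesis
      using on_K[OF c(1)] by (simp add: matrix_vector_right_distrib matrix_vector_mult_scaleR)
  qed
  then show ?thesis
    by (simp add: matrix_eq)
qed

section \<open>Powers of \<open>K\<close>-nonnegative matrices\<close>

lemma proper_cone_zero_notin_convex_hull_sphere:
  assumes "proper_cone K"
  shows "0 \<notin> convex hull (K \<inter> sphere 0 1)"
proof
  assume "0 \<in> convex hull (K \<inter> sphere 0 1)"
  then obtain S u where S: "finite S" "S \<subseteq> K \<inter> sphere 0 1" "\<forall>x\<in>S. 0 \<le> u x"
    "sum u S = 1" "(\<Sum>v\<in>S. u v *\<^sub>R v) = 0"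
    unfolding convex_hull_explicit by blast
  obtain v where "v \<in> S" "u v \<noteq> 0"
    using S(4) sum.neutral by (metis zero_neq_one)
  with S(3) have v: "v \<in> S" "u v > 0"
    by (auto simp: less_le)
  have cone: "convex_cone K"
    using assms by (rule proper_cone_convex_cone)
  have "u v *\<^sub>R v \<in> K"
    using S(2) v by (intro convex_cone_scaleR[OF cone]) auto
  moreover have "- (u v *\<^sub>R v) \<in> K"
  proof -
    have "u v *\<^sub>R v + (\<Sum>x\<in>S - {v}. u x *\<^sub>R x) = 0"
      using S(1,5) v(1) by (simp add: sum.remove)
    then have "- (u v *\<^sub>R v) = (\<Sum>x\<in>S - {v}. u x *\<^sub>R x)"
      by (rule minus_unique)
    also have "\<dots> \<in> K"
      using S(2,3) by (intro convex_cone_sum[OF cone] convex_cone_scaleR[OF cone]) auto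
    finally show ?thesis .
  qed
  ultimately have "u v *\<^sub>R v = 0"
    by (rule proper_cone_pointed[OF assms])
  then show False
    using S(2) v by auto
qed

lemma proper_cone_positive_functional:
  assumes "proper_cone K"
  obtains f \<delta> where "\<delta> > 0" "\<And>x. x \<in> K \<Longrightarrow> \<delta> * norm x \<le> inner f x"
proof -
  define C where "C = convex hull (K \<inter> sphere 0 1)"
  have "compact (K \<inter> sphere 0 1)"
    using assms unfolding proper_cone_def by (intro closed_Int_compact) auto
  then have "compact C"
    unfolding C_def by (rule compact_convex_hull)
  have "convex C"
    unfolding C_def by (rule convex_convex_hull)
  have "0 \<notin> C"
    unfolding C_def using assms by (rule proper_cone_zero_notin_convex_hull_sphere)
  then obtain f b where fb: "0 < b" "\<forall>x\<in>C. b < inner f x"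
    using separating_hyperplane_closed_0[OF \<open>convex C\<close> compact_imp_closed[OF \<open>compact C\<close>]]
    by blast
  have "b * norm x \<le> inner f x" if "x \<in> K" for x
  proof (cases "x = 0")
    case False
    have "(1 / norm x) *\<^sub>R x \<in> K"
      using that convex_cone_scaleR[OF proper_cone_convex_cone[OF assms]] by simp
    moreover have "(1 / norm x) *\<^sub>R x \<in> sphere 0 1"
      using False by simp
    ultimately have "(1 / norm x) *\<^sub>R x \<in> C"
      unfolding C_def by (intro hull_inc) simp
    then have "b < inner f ((1 / norm x) *\<^sub>R x)"
      using fb(2) by blast
    then have "b < inner f x / norm x"
      by simp
    then show ?thesis
      using False by (simp add: pos_less_divide_eq)
  qed simp
  then show thesis
    using fb(1) that by blast
qed

lemma proper_cone_norm_le_norm_add: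
  assumes "proper_cone K"
  obtains C where "\<And>p q. p \<in> K \<Longrightarrow> q \<in> K \<Longrightarrow> norm p \<le> C * norm (p + q)"
proof -
  obtain f \<delta> where f: "\<delta> > 0" "\<And>x. x \<in> K \<Longrightarrow> \<delta> * norm x \<le> inner f x"
    using proper_cone_positive_functional[OF assms] by blast
  have "norm p \<le> norm f / \<delta> * norm (p + q)" if "p \<in> K" "q \<in> K" for p q
  proof -
    have "\<delta> * norm p \<le> inner f p"
      using f(2) that(1) .
    also have "\<dots> \<le> inner f p + inner f q"
      using f(2)[OF that(2)] f(1) by (smt (verit) mult_nonneg_nonneg norm_ge_zero)
    also have "\<dots> \<le> norm f * norm (p + q)"
      by (metis inner_add_right norm_cauchy_schwarz)
    finally show ?thesis
      using f(1) by (simp add: field_simps)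
  qed
  then show thesis
    using that by blast
qed

lemma K_nonneg_powers_tendsto_zero_if_sums_bounded:
  assumes "proper_cone K" "K_nonneg K T" "z \<in> K"
    and bounded: "\<And>m. w - (\<Sum>k<m. mat_pow T k *v z) \<in> K"
  shows "(\<lambda>k. mat_pow T k *v z) \<longlonglongrightarrow> 0"
proof -
  obtain f \<delta> where f: "\<delta> > 0" "\<And>x. x \<in> K \<Longrightarrow> \<delta> * norm x \<le> inner f x"
    using proper_cone_positive_functional[OF assms(1)] by blast
  define g where "g k = inner f (mat_pow T k *v z)" for k
  have norm_le: "norm (mat_pow T k *v z) \<le> g k / \<delta>" for k
    using f K_nonneg_mat_pow[OF assms(2)] assms(3) unfolding g_def K_nonneg_def
    by (simp add: field_simps)
  have "0 \<le> g k" for k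
  proof -
    have "0 \<le> g k / \<delta>"
      using norm_le[of k] by (rule order_trans[OF norm_ge_zero])
    with f(1) show ?thesis
      by (simp add: zero_le_divide_iff)
  qed
  moreover have "(\<Sum>k<m. g k) \<le> inner f w" for m
  proof -
    have "0 \<le> inner f (w - (\<Sum>k<m. mat_pow T k *v z))"
      using f(2)[OF bounded[of m]] f(1) by (meson less_imp_le mult_nonneg_nonneg norm_ge_zero order_trans)
    then show ?thesis
      by (simp add: g_def inner_diff_right inner_sum_right)
  qed
  ultimately have "g \<longlonglongrightarrow> 0"
    by (intro summable_LIMSEQ_zero summableI_nonneg_bounded)
  then show ?thesis
    by (intro Lim_null_comparison[OF always_eventually[OF allI[OF norm_le]]] tendsto_divide_zero)
qed

lemma K_nonneg_powers_tendsto_zero: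
  assumes "proper_cone K" "K_nonneg K T" "order_unit K z"
    and "(\<lambda>k. mat_pow T k *v z) \<longlonglongrightarrow> 0"
  shows "(\<lambda>k. mat_pow T k *v a) \<longlonglongrightarrow> 0"
proof -
  obtain C where C: "\<And>p q. p \<in> K \<Longrightarrow> q \<in> K \<Longrightarrow> norm p \<le> C * norm (p + q)"
    using proper_cone_norm_le_norm_add[OF assms(1)] by blast
  obtain r where r: "r *\<^sub>R z + a \<in> K" "r *\<^sub>R z - a \<in> K"
    using assms(3) unfolding order_unit_def by blast
  define p where "p k = mat_pow T k *v (r *\<^sub>R z + a)" for k
  have bound: "norm (p k) \<le> C * norm ((2 * r) *\<^sub>R (mat_pow T k *v z))" for k
  proof -
    have "(r *\<^sub>R z + a) + (r *\<^sub>R z - a) = (2 * r) *\<^sub>R z"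
      by (simp add: algebra_simps flip: scaleR_2)
    then have "p k + mat_pow T k *v (r *\<^sub>R z - a) = (2 * r) *\<^sub>R (mat_pow T k *v z)"
      unfolding p_def by (metis matrix_vector_right_distrib matrix_vector_mult_scaleR)
    moreover have "p k \<in> K" "mat_pow T k *v (r *\<^sub>R z - a) \<in> K"
      using r K_nonneg_mat_pow[OF assms(2)] unfolding p_def K_nonneg_def by blast+
    ultimately show ?thesis
      using C by metis
  qed
  have "(\<lambda>k. (2 * r) *\<^sub>R (mat_pow T k *v z)) \<longlonglongrightarrow> 0"
    using tendsto_scaleR[OF tendsto_const assms(4), of "2 * r"] by simp
  then have "(\<lambda>k. C * norm ((2 * r) *\<^sub>R (mat_pow T k *v z))) \<longlonglongrightarrow> 0"
    by (intro tendsto_mult_right_zero tendsto_norm_zero)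
  then have "p \<longlonglongrightarrow> 0"
    by (rule Lim_null_comparison[OF always_eventually[OF allI[OF bound]]])
  moreover have "mat_pow T k *v a = p k - r *\<^sub>R (mat_pow T k *v z)" for k
    unfolding p_def by (simp add: matrix_vector_right_distrib matrix_vector_mult_scaleR)
  ultimately show ?thesis
    using tendsto_diff[OF _ tendsto_scaleR[OF tendsto_const assms(4)], of p 0 r] by simp
qed

section \<open>Spectral radius\<close>

lemma det_mat_minus_monic_poly:
  fixes M :: "complex^'n^'n"
  obtains P where "\<And>z. poly P z = det (mat z - M)" "coeff P CARD('n) = 1"
proof -
  \<comment> \<open>Leibniz expansion; only the identity permutation reaches degree \<open>CARD('n)\<close>\<close>
  define q where "q p = (\<Prod>i\<in>UNIV. [: - M$i$(p i), if p i = i then 1 else 0 :])" for p :: "'n \<Rightarrow> 'n"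
  define P where "P = (\<Sum>p\<in>{p. p permutes (UNIV::'n set)}. smult (of_int (sign p)) (q p))"
  have "poly P z = det (mat z - M)" for z
    unfolding P_def q_def det_def
    by (auto simp: poly_sum poly_prod mat_def algebra_simps intro!: sum.cong prod.cong)
  moreover have "coeff (q id) CARD('n) = 1"
  proof -
    have qid: "q id = (\<Prod>i\<in>UNIV. [: - M$i$i, 1 :])"
      by (simp add: q_def)
    have "degree (q id) = CARD('n)"
      unfolding qid by (subst degree_prod_eq_sum_degree) auto
    moreover have "lead_coeff (q id) = 1"
      unfolding qid lead_coeff_prod by simp
    ultimately show ?thesis
      by simp
  qed
  moreover have "coeff (q p) CARD('n) = 0" if "p permutes UNIV" "p \<noteq> id" for p
  proof -
    obtain i0 where i0: "p i0 \<noteq> i0"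
      using \<open>p \<noteq> id\<close> by (auto simp: fun_eq_iff)
    have "degree (q p) \<le> (\<Sum>i\<in>UNIV. degree [: - M$i$(p i), if p i = i then 1 else 0 :])"
      unfolding q_def by (rule order.trans[OF degree_prod_sum_le]) (simp_all add: o_def)
    also have "\<dots> = degree [: - M$i0$(p i0), if p i0 = i0 then 1 else 0 :] +
        (\<Sum>i\<in>UNIV - {i0}. degree [: - M$i$(p i), if p i = i then 1 else 0 :])"
      by (simp add: sum.remove)
    also have "\<dots> \<le> 0 + (\<Sum>i\<in>UNIV - {i0}. 1)"
      using i0 by (intro add_mono sum_mono) auto
    also have "\<dots> < CARD('n)"
      by (simp add: card_Diff_singleton)
    finally show ?thesis
      by (simp add: coeff_eq_0)
  qed
  ultimately have "coeff P CARD('n) = 1"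
    unfolding P_def coeff_sum
    by (simp add: sum.remove[of _ id] permutes_id finite_permutations sign_id)
  with \<open>\<And>z. poly P z = det (mat z - M)\<close> show thesis
    using that by blast
qed

lemma eigenvalues_finite_nonempty:
  fixes M :: "complex^'n^'n"
  shows "finite {z. det (mat z - M) = 0}" "{z. det (mat z - M) = 0} \<noteq> {}"
proof -
  obtain P where P: "\<And>z. poly P z = det (mat z - M)" "coeff P CARD('n) = 1"
    using det_mat_minus_monic_poly by blast
  then have "P \<noteq> 0"
    by auto
  then show "finite {z. det (mat z - M) = 0}"
    using poly_roots_finite[of P] by (simp add: P(1))
  have "\<exists>z. poly P z = 0"
  proof (rule fundamental_theorem_of_algebra_alt, safe)
    fix a l
    assume "a \<noteq> 0" "P = pCons a 0"
    then show False
      using P(2) by (cases "CARD('n)") auto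
  qed
  then show "{z. det (mat z - M) = 0} \<noteq> {}"
    by (simp add: P(1))
qed

lemma eigenvector_exists:
  fixes M :: "'a::field^'n^'n"
  assumes "det (mat z - M) = 0"
  obtains x where "x \<noteq> 0" "M *v x = z *s x"
proof -
  have "\<not> (\<exists>B. B ** (mat z - M) = mat 1)"
    using assms invertible_det_nz invertible_left_inverse by blast
  then obtain x where "(mat z - M) *v x = 0" "x \<noteq> 0"
    using matrix_left_invertible_ker by blast
  moreover have "mat z *v x = z *s x"
    by (simp add: vec_eq_iff matrix_vector_mult_def mat_def if_distrib if_distribR cong del: if_weak_cong)
  ultimately show thesis
    using that by (simp add: matrix_vector_mult_diff_rdistrib)
qed

lemma mat_pow_eigenvector_Re_Im:
  fixes T :: "real^'n^'n"
  assumes "(\<chi> i j. complex_of_real (T $ i $ j)) *v x = z *s x"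
  shows "Complex ((mat_pow T k *v (\<chi> j. Re (x $ j))) $ i) ((mat_pow T k *v (\<chi> j. Im (x $ j))) $ i)
           = z ^ k * x $ i"
proof (induction k arbitrary: i)
  case 0
  then show ?case
    by (simp add: complex_eq_iff)
next
  case (Suc k)
  let ?a = "mat_pow T k *v (\<chi> j. Re (x $ j))" and ?b = "mat_pow T k *v (\<chi> j. Im (x $ j))"
  have "Complex ((T *v ?a) $ i) ((T *v ?b) $ i) = (\<Sum>l\<in>UNIV. complex_of_real (T $ i $ l) * Complex (?a $ l) (?b $ l))"
    by (simp add: complex_eq_iff matrix_vector_mult_def Re_sum Im_sum)
  also have "\<dots> = (\<Sum>l\<in>UNIV. complex_of_real (T $ i $ l) * (z ^ k * x $ l))"
    by (simp only: Suc.IH)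
  also have "\<dots> = z ^ k * ((\<chi> i j. complex_of_real (T $ i $ j)) *v x) $ i"
    by (simp add: matrix_vector_mult_def sum_distrib_left mult_ac)
  also have "\<dots> = z ^ Suc k * x $ i"
    by (simp add: assms)
  finally show ?case
    by (simp add: matrix_vector_mul_assoc)
qed

lemma spectral_radius_less_one:
  fixes T :: "real^'n^'n"
  assumes "\<And>a. (\<lambda>k. mat_pow T k *v a) \<longlonglongrightarrow> 0"
  shows "spectral_radius T < 1"
proof -
  define M where "M = (\<chi> i j. complex_of_real (T $ i $ j))"
  have "norm z < 1" if "det (mat z - M) = 0" for z
  proof (rule ccontr)
    assume "\<not> norm z < 1"
    obtain x where x: "x \<noteq> 0" "M *v x = z *s x"
      using eigenvector_exists[OF \<open>det (mat z - M) = 0\<close>] by blast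
    then obtain i where "x $ i \<noteq> 0"
      by (auto simp: vec_eq_iff)
    let ?a = "\<lambda>k. (mat_pow T k *v (\<chi> j. Re (x $ j))) $ i"
      and ?b = "\<lambda>k. (mat_pow T k *v (\<chi> j. Im (x $ j))) $ i"
    have bound: "norm (z ^ k * x $ i) \<le> \<bar>?a k\<bar> + \<bar>?b k\<bar>" for k
    proof -
      have "norm (Complex (?a k) (?b k)) \<le> \<bar>?a k\<bar> + \<bar>?b k\<bar>"
        using cmod_le[of "Complex (?a k) (?b k)"] by simp
      then show ?thesis
        by (simp only: mat_pow_eigenvector_Re_Im[OF x(2)[unfolded M_def]])
    qed
    have "(\<lambda>k. \<bar>?a k\<bar> + \<bar>?b k\<bar>) \<longlonglongrightarrow> 0"
      using tendsto_vec_nth[OF assms, where i = i] by (intro tendsto_add_zero tendsto_rabs_zero) simp_all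
    then have "(\<lambda>k. z ^ k * x $ i) \<longlonglongrightarrow> 0"
      by (rule Lim_null_comparison[OF always_eventually[OF allI[OF bound]]])
    then have lim: "(\<lambda>k. norm (z ^ k * x $ i)) \<longlonglongrightarrow> 0"
      by (rule tendsto_norm_zero)
    have ge: "norm (x $ i) \<le> norm (z ^ k * x $ i)" for k
      using \<open>\<not> norm z < 1\<close> by (simp add: norm_mult norm_power mult_le_cancel_right1 one_le_power)
    have "norm (x $ i) \<le> 0"
      by (rule LIMSEQ_le_const[OF lim]) (use ge in blast)
    then show False
      using \<open>x $ i \<noteq> 0\<close> by simp
  qed
  then show ?thesis
    using eigenvalues_finite_nonempty[of M] unfolding spectral_radius_def M_def
    by (subst Max_less_iff) auto
qed

lemma spectral_radius_less_one_if_K_splitting: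
  assumes K: "proper_cone K" and A: "K_monotone K A"
    and T: "K_nonneg K T" "T = mat 1 - B ** A"
    and B: "K_ge K B P" and P: "invertible P" "K_nonneg K P"
  shows "spectral_radius T < 1"
proof -
  obtain c where c: "c \<in> K" "order_unit K c"
    using proper_cone_has_order_unit[OF K] by blast
  define z where "z = P *v c"
  define w where "w = matrix_inv A *v c"
  have "z \<in> K"
    using P(2) c(1) unfolding z_def K_nonneg_def by blast
  have "order_unit K z"
    unfolding z_def using P c(2) by (rule order_unit_matrix_image)
  have "w \<in> K"
    using A c(1) unfolding w_def K_monotone_def K_nonneg_def by blast
  have "B *v c - z \<in> K"
    using B c(1) unfolding z_def K_ge_def K_nonneg_def by (simp add: matrix_vector_mult_diff_rdistrib)
  have Bc: "B *v c = (mat 1 - T) *v w"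
    using A T(2) unfolding w_def K_monotone_def
    by (simp add: matrix_vector_mul_assoc matrix_mul_assoc[symmetric] matrix_inv_right)
  have "(\<Sum>k<m. mat_pow T k *v (B *v c)) = w - mat_pow T m *v w" for m
  proof -
    have "(\<Sum>k<m. mat_pow T k *v (B *v c)) = (\<Sum>k<m. mat_pow T k ** (mat 1 - T)) *v w"
      by (simp only: Bc sum_matrix_vector_mult matrix_vector_mul_assoc)
    also have "\<dots> = w - mat_pow T m *v w"
      by (simp add: mat_pow_telescope matrix_vector_mult_diff_rdistrib)
    finally show ?thesis .
  qed
  then have partial_sums: "w - (\<Sum>k<m. mat_pow T k *v z)
      = mat_pow T m *v w + (\<Sum>k<m. mat_pow T k *v (B *v c - z))" for m
    by (simp add: matrix_vector_mult_diff_distrib sum_subtractf)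
  have "mat_pow T m *v w + (\<Sum>k<m. mat_pow T k *v (B *v c - z)) \<in> K" for m
    using K_nonneg_mat_pow[OF T(1)] \<open>w \<in> K\<close> \<open>B *v c - z \<in> K\<close> proper_cone_convex_cone[OF K]
    unfolding K_nonneg_def by (intro convex_cone_add convex_cone_sum) auto
  then have "(\<lambda>k. mat_pow T k *v z) \<longlonglongrightarrow> 0"
    unfolding partial_sums[symmetric] by (rule K_nonneg_powers_tendsto_zero_if_sums_bounded[OF K T(1) \<open>z \<in> K\<close>])
  then show ?thesis
    using K_nonneg_powers_tendsto_zero[OF K T(1) \<open>order_unit K z\<close>] spectral_radius_less_one by blast
qed

lemma spectral_radius_iteration_matrix_less_one:
  assumes K: "proper_cone K" and A: "K_monotone K A"
    and "K_regular_splitting K A U V" and "K_weak_regular_I K U F G" and "s \<ge> 1"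
  shows "spectral_radius (mat_pow (matrix_inv F ** G) s +
           (\<Sum>j<s. mat_pow (matrix_inv F ** G) j ** matrix_inv F ** V)) < 1"
proof -
  from assms(3) have AUV: "A = U - V" and V: "K_nonneg K V"
    unfolding K_regular_splitting_def by auto
  from assms(4) have UFG: "U = F - G" "invertible F"
    and Fi: "K_nonneg K (matrix_inv F)" and H: "K_nonneg K (matrix_inv F ** G)"
    unfolding K_weak_regular_I_def by auto
  have cone: "convex_cone K"
    using K by (rule proper_cone_convex_cone)
  let ?H = "matrix_inv F ** G"
  let ?B = "\<Sum>j<s. mat_pow ?H j ** matrix_inv F"
  have "K_nonneg K (mat_pow ?H s + (\<Sum>j<s. mat_pow ?H j ** matrix_inv F ** V))"
    by (intro K_nonneg_add K_nonneg_sum K_nonneg_mult K_nonneg_mat_pow cone H Fi V)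
  moreover have "mat_pow ?H s + (\<Sum>j<s. mat_pow ?H j ** matrix_inv F ** V) = mat 1 - ?B ** A"
    using AUV UFG by (rule splitting_iteration_matrix_eq)
  moreover have "K_ge K ?B (matrix_inv F)"
  proof -
    have "?B - matrix_inv F = (\<Sum>j\<in>{..<s} - {0}. mat_pow ?H j ** matrix_inv F)"
      using \<open>s \<ge> 1\<close> by (simp add: sum.remove[of "{..<s}" 0])
    then show ?thesis
      unfolding K_ge_def by (simp add: K_nonneg_sum K_nonneg_mult K_nonneg_mat_pow cone H Fi)
  qed
  moreover have "invertible (matrix_inv F)"
    using matrix_inv_left[OF UFG(2)] matrix_inv_right[OF UFG(2)] unfolding invertible_def by blast
  ultimately show ?thesis
    using spectral_radius_less_one_if_K_splitting[OF K A] Fi by blast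
qed

lemma K_comparable_splittings_inverse_eq:
  fixes U F G Fb Gb :: "real^'n^'n"
  assumes K: "proper_cone K" and U: "invertible U" "K_nonneg K (matrix_inv U)"
    and "U = F - G" "invertible F" "U = Fb - Gb" "invertible Fb"
    and "K_ge K (matrix_inv F) (matrix_inv Fb)"
    and "K_ge K (matrix_inv F ** G) (matrix_inv Fb ** Gb)"
  shows "matrix_inv F = matrix_inv Fb"
proof (rule K_ge_antisym[OF K assms(8)])
  have "matrix_inv F ** G - matrix_inv Fb ** Gb = (matrix_inv Fb - matrix_inv F) ** U"
    using matrix_inv_mult_splitting[OF assms(4,5)] matrix_inv_mult_splitting[OF assms(6,7)]
    by (simp add: matrix_diff_rdistrib)
  then have "matrix_inv Fb - matrix_inv F = (matrix_inv F ** G - matrix_inv Fb ** Gb) ** matrix_inv U"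
    using U(1) by (simp add: matrix_mul_assoc[symmetric] matrix_inv_right)
  then show "K_ge K (matrix_inv Fb) (matrix_inv F)"
    using assms(9) U(2) unfolding K_ge_def by (simp add: K_nonneg_mult)
qed

theorem theorem3p12:
  fixes K :: "(real ^ 'n) set"
    and A U V F G Fb Gb :: "real ^ 'n ^ 'n"
    and s :: nat
  assumes "proper_cone K"
    and "K_monotone K A"
    and "K_regular_splitting K A U V"
    and "K_weak_regular_I K U F G"
    and "K_weak_regular_II K U Fb Gb"
    and "V ** matrix_inv Fb ** Gb = Gb ** matrix_inv Fb ** V"
    and "s \<ge> 1"
    and "K_ge K (matrix_inv F) (matrix_inv Fb)"
    and "K_ge K (matrix_inv F ** G) (matrix_inv Fb ** Gb)"
  shows "spectral_radius
           (mat_pow (matrix_inv F ** G) s +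
            (\<Sum>j<s. mat_pow (matrix_inv F ** G) j ** matrix_inv F ** V))
         \<le> spectral_radius
           (mat_pow (matrix_inv Fb ** Gb) s +
            (\<Sum>j<s. mat_pow (matrix_inv Fb ** Gb) j ** matrix_inv Fb ** V))
       \<and> spectral_radius
           (mat_pow (matrix_inv Fb ** Gb) s +
            (\<Sum>j<s. mat_pow (matrix_inv Fb ** Gb) j ** matrix_inv Fb ** V)) < 1"
proof -
  from assms(3) have U: "invertible U" "K_nonneg K (matrix_inv U)"
    unfolding K_regular_splitting_def by auto
  from assms(4) have F: "U = F - G" "invertible F"
    unfolding K_weak_regular_I_def by auto
  from assms(5) have Fb: "U = Fb - Gb" "invertible Fb"
    unfolding K_weak_regular_II_def by auto
  have inv_eq: "matrix_inv Fb = matrix_inv F"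
    using K_comparable_splittings_inverse_eq[OF assms(1) U F Fb assms(8,9)] by simp
  then have "matrix_inv Fb ** Gb = matrix_inv F ** G"
    using matrix_inv_mult_splitting[OF F] matrix_inv_mult_splitting[OF Fb] by simp
  then show ?thesis
    using inv_eq spectral_radius_iteration_matrix_less_one[OF assms(1-4,7)] by simp
qed

end
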